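(* Let $r<s$ be positive integers with $r\ge 2$, and let $x$ be a non-negative integer whose $r$-canonical representation is $[x]^r=\binom{n}{r}+\binom{m}{r-1}+\binom{t}{r-2}$ (so $n>m>t$). Suppose there is an integer $w$ with $\binom{t}{r-2}=\binom{w}{r-1}$, $s-2>t$ and $s-1>w$. Then $$k_s(k_r\le x)=[x]^r_s=\binom{n}{s}+\binom{m}{s-1}.$$ Moreover, for every integer $y$ with $\binom{n}{r}+\binom{m}{r-1}\le y\le x$ we have $k_s(k_r\le y)=[y]^r_s=\binom{n}{s}+\binom{m}{s-1}$.
   Context: All graphs are finite simple graphs. For a graph $g$ and an integer $r>1$, $k_r(g)$ denotes the number of subgraphs of $g$ isomorphic to the complete graph $K_r$ (equivalently, the number of $r$-vertex cliques of $g$). For $r<s$ and a non-negative integer $x$, $k_s(k_r\le x)$ denotes the maximum of $k_s(g)$ over all graphs $g$ with $k_r(g)\le x$. The $r$-canonical representation $[x]^r$ of a non-negative integer $x$ is obtained greedily: choose $a_r$ as large as possible with $\binom{a_r}{r}\le x$, then $a_{r-1}$ as large as possible with $\binom{a_{r-1}}{r-1}\le x-\binom{a_r}{r}$, and so on, until $x=\binom{a_r}{r}+\binom{a_{r-1}}{r-1}+\dots+\binom{a_{r-j}}{r-j}$; one has $a_r>a_{r-1}>\dots>a_{r-j}$. For $r<s$, $[x]^r_s$ denotes the number obtained by replacing $r$ by $s$ in this representation: $[x]^r_s=\binom{a_r}{s}+\binom{a_{r-1}}{s-1}+\dots+\binom{a_{r-j}}{s-j}$. A binomial coefficient whose top entry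 is less than its bottom entry is taken to be $0$. *)

theory Defs
  imports Main
begin

type_synonym graph = "nat set \<times> nat set set"

definition is_graph :: "graph \<Rightarrow> bool" where
  "is_graph G \<longleftrightarrow> finite (fst G) \<and> (\<forall>e\<in>snd G. card e = 2 \<and> e \<subseteq> fst G)"

definition kcount :: "nat \<Rightarrow> graph \<Rightarrow> nat" where
  "kcount r G = card {S. S \<subseteq> fst G \<and> card S = r \<and>
      (\<forall>u\<in>S. \<forall>v\<in>S. u \<noteq> v \<longrightarrow> {u, v} \<in> snd G)}"

definition kmax :: "nat \<Rightarrow> nat \<Rightarrow> nat \<Rightarrow> nat" where
  "kmax r s x = Max {kcount s G | G. is_graph G \<and> kcount r G \<le> x}"

text \<open>Greedy r-canonical representation: list [a_r, a_{r-1}, ..., a_{r-j}].\<close>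
fun canon :: "nat \<Rightarrow> nat \<Rightarrow> nat list" where
  "canon 0 x = []"
| "canon (Suc k) x =
     (if x = 0 then []
      else (let a = (GREATEST a. a choose Suc k \<le> x)
            in a # canon k (x - (a choose Suc k))))"

text \<open>[x]^r_s: replace r by s in the r-canonical representation.\<close>
definition canon_shift :: "nat \<Rightarrow> nat \<Rightarrow> nat \<Rightarrow> nat" where
  "canon_shift r s x = (let L = canon r x in \<Sum>i<length L. (L ! i) choose (s - i))"

end

theory Submission
  imports Defs
begin

text \<open>Upper bound: the \<open>(j - 1)\<close>-cliques of a graph contain the shadow of its \<open>j\<close>-cliques, so
  the Kruskal--Katona theorem in cascade form, applied \<open>s - r\<close> times, turns more than
  \<open>(n choose s) + (m choose (s - 1))\<close> copies of \<open>K_s\<close> into at least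
  \<open>(n choose r) + (m choose (r - 1)) + (s - 2 choose (r - 2))\<close> copies of \<open>K_r\<close>, which is more than \<open>x\<close>
  because \<open>t < s - 2\<close>. Kruskal--Katona is proved by
  shifting: compressions keep the size and do not enlarge the shadow, and a shifted family splits
  at the vertex \<open>0\<close> into the link of \<open>0\<close> and the sets avoiding \<open>0\<close>, whose shadow lies in the
  link; then induct on the uniformity and the size of the family.
  Lower bound: \<open>K_n\<close> plus a vertex joined to \<open>m\<close> of its vertices has exactly
  \<open>(n choose j) + (m choose (j - 1))\<close> copies of \<open>K_j\<close>.
  Finally, the canonical representation of every \<open>y\<close> between \<open>(n choose r) + (m choose (r - 1))\<close> and
  \<open>x\<close> starts with \<open>n, m\<close>, and its remaining entries are too small to contribute to \<open>[y]^r_s\<close>.\<close>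

definition shadow :: "nat set set \<Rightarrow> nat set set" where
  "shadow F = {A - {x} | A x. A \<in> F \<and> x \<in> A}"

definition shift :: "nat \<Rightarrow> nat \<Rightarrow> nat set \<Rightarrow> nat set" where
  "shift i j A = (if j \<in> A \<and> i \<notin> A then insert i (A - {j}) else A)"

definition shift_within :: "nat \<Rightarrow> nat \<Rightarrow> nat set set \<Rightarrow> nat set \<Rightarrow> nat set" where
  "shift_within i j F A = (if shift i j A \<in> F then A else shift i j A)"

definition shift_family :: "nat \<Rightarrow> nat \<Rightarrow> nat set set \<Rightarrow> nat set set" where
  "shift_family i j F = shift_within i j F ` F"

definition shifted :: "nat set set \<Rightarrow> bool" where
  "shifted F \<longleftrightarrow> (\<forall>A\<in>F. \<forall>i j. i < j \<longrightarrow> shift i j A \<in> F)"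

lemma shift_eq_self: "\<not> (j \<in> A \<and> i \<notin> A) \<Longrightarrow> shift i j A = A"
  unfolding shift_def by auto

lemma shift_moves: "j \<in> A \<Longrightarrow> i \<notin> A \<Longrightarrow> shift i j A = insert i (A - {j})"
  unfolding shift_def by simp

lemma card_shift: "card (shift i j A) = card A"
proof (cases "finite A \<and> j \<in> A \<and> i \<notin> A")
  case True
  then have "card A > 0" by (auto simp: card_gt_0_iff)
  with True show ?thesis by (simp add: shift_moves)
qed (auto simp: shift_def)

lemma inj_on_shift_within:
  assumes "i \<noteq> j"
  shows "inj_on (shift_within i j F) F"
proof (rule inj_onI)
  have undo: "insert j (shift i j A - {i}) = A" if "j \<in> A" "i \<notin> A" for A
    using that assms by (auto simp: shift_moves)
  fix A B assume "A \<in> F" "B \<in> F" and eq: "shift_within i j F A = shift_within i j F B"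
  then consider "shift i j A \<in> F" "shift i j B \<in> F"
    | "shift i j A \<notin> F" "shift i j B \<notin> F" "shift i j A = shift i j B"
    | "shift i j A \<in> F" "shift i j B \<notin> F" "A = shift i j B"
    | "shift i j A \<notin> F" "shift i j B \<in> F" "shift i j A = B"
    unfolding shift_within_def by (auto split: if_splits)
  then show "A = B"
  proof cases
    case 2
    with \<open>A \<in> F\<close> \<open>B \<in> F\<close> have "j \<in> A \<and> i \<notin> A" "j \<in> B \<and> i \<notin> B"
      using shift_eq_self by metis+
    with 2 show ?thesis using undo by metis
  qed (use eq \<open>A \<in> F\<close> \<open>B \<in> F\<close> in \<open>auto simp: shift_within_def\<close>)
qed

lemma card_shift_family: "i \<noteq> j \<Longrightarrow> card (shift_family i j F) = card F"
  unfolding shift_family_def by (rule card_image[OF inj_on_shift_within])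

lemma finite_shift_family: "finite F \<Longrightarrow> finite (shift_family i j F)"
  unfolding shift_family_def by simp

lemma shift_family_iff:
  "X \<in> shift_family i j F \<longleftrightarrow> (X \<in> F \<and> shift i j X \<in> F) \<or> (X \<notin> F \<and> (\<exists>C\<in>F. X = shift i j C))"
  unfolding shift_family_def shift_within_def image_iff by (auto split: if_splits)

lemma shift_remove_in_shadow:
  assumes "i < j" "A \<in> F" "shift i j A \<in> F" "x \<in> A"
  shows "shift i j (A - {x}) \<in> shadow F"
proof (cases "j \<in> A - {x} \<and> i \<notin> A - {x}")
  case False
  then show ?thesis using assms by (auto simp: shift_eq_self shadow_def)
next
  case True
  show ?thesis
  proof (cases "i \<in> A")
    case False
    then have "shift i j (A - {x}) = shift i j A - {x}" "x \<in> shift i j A"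
      using True assms(4) by (auto simp: shift_moves)
    then show ?thesis using assms(3) unfolding shadow_def by blast
  next
    case i: True
    then have "shift i j (A - {x}) = A - {j}"
      using True assms(1) by (auto simp: shift_moves)
    then show ?thesis using assms(2) True unfolding shadow_def by blast
  qed
qed

lemma shadow_shift_family_subset:
  assumes "i < j"
  shows "shadow (shift_family i j F) \<subseteq> shift_family i j (shadow F)"
proof
  fix X assume "X \<in> shadow (shift_family i j F)"
  then obtain A x where A: "A \<in> shift_family i j F" and x: "x \<in> A" and X: "X = A - {x}"
    unfolding shadow_def by auto
  from A consider "A \<in> F" "shift i j A \<in> F" | C where "C \<in> F" "A \<notin> F" "A = shift i j C"
    unfolding shift_family_iff by blast
  then show "X \<in> shift_family i j (shadow F)"
  proof cases
    case 1
    then have "X \<in> shadow F" using x X unfolding shadow_def by blast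
    then show ?thesis using shift_remove_in_shadow[OF assms 1 x] X by (simp add: shift_family_iff)
  next
    case (2 C)
    then have C: "j \<in> C" "i \<notin> C" "A = insert i (C - {j})"
      using shift_eq_self shift_moves by metis+
    show ?thesis
    proof (cases "x = i")
      case True
      then have "X = C - {j}" using C X by auto
      then have "X \<in> shadow F" "shift i j X = X"
        using \<open>C \<in> F\<close> C by (auto simp: shadow_def shift_eq_self)
      then show ?thesis by (simp add: shift_family_iff)
    next
      case False
      then have "x \<in> C" "x \<noteq> j" using x C assms by auto
      then have "C - {x} \<in> shadow F" "X = shift i j (C - {x})" "i \<in> X"
        using \<open>C \<in> F\<close> C X False by (auto simp: shadow_def shift_moves)
      then show ?thesis using shift_eq_self[of j X i] by (auto simp: shift_family_iff)
    qed
  qed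
qed

lemma finite_shadow:
  assumes "finite F" "\<forall>A\<in>F. finite A"
  shows "finite (shadow F)"
proof -
  have "shadow F = (\<lambda>(A, x). A - {x}) ` (SIGMA A:F. A)"
    unfolding shadow_def by auto
  then show ?thesis using assms by auto
qed

definition weight :: "nat set set \<Rightarrow> nat" where
  "weight F = (\<Sum>A\<in>F. \<Sum>A)"

lemma weight_shift_family_less:
  assumes fin: "finite F" "\<forall>A\<in>F. finite A" and "i < j"
    and A: "A \<in> F" "shift i j A \<notin> F"
  shows "weight (shift_family i j F) < weight F"
proof -
  have moved: "\<Sum>(shift i j B) + j = \<Sum>B + i" if "B \<in> F" "shift i j B \<notin> F" for B
  proof -
    from that have "j \<in> B" "i \<notin> B" using shift_eq_self by metis+
    with that fin show ?thesis by (simp add: shift_moves sum.remove)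
  qed
  have "weight (shift_family i j F) = (\<Sum>B\<in>F. \<Sum>(shift_within i j F B))"
    unfolding weight_def shift_family_def
    using sum.reindex[OF inj_on_shift_within[of i j F]] \<open>i < j\<close> by (simp add: comp_def)
  also have "\<dots> < (\<Sum>B\<in>F. \<Sum>B)"
  proof (rule sum_strict_mono_ex1[OF fin(1)])
    show "\<forall>B\<in>F. \<Sum>(shift_within i j F B) \<le> \<Sum>B"
      using moved \<open>i < j\<close> by (fastforce simp: shift_within_def)
    show "\<exists>B\<in>F. \<Sum>(shift_within i j F B) < \<Sum>B"
      using moved[OF A] A \<open>i < j\<close> by (auto simp: shift_within_def)
  qed
  finally show ?thesis unfolding weight_def .
qed

lemma exists_shifted_family:
  assumes "finite F" "\<forall>A\<in>F. card A = k" "k > 0"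
  obtains G where "shifted G" "finite G" "card G = card F"
    "card (shadow G) \<le> card (shadow F)" "\<forall>A\<in>G. card A = k"
  using assms
proof (induction "weight F" arbitrary: F rule: less_induct)
  case less
  show ?case
  proof (cases "shifted F")
    case True with less.prems show ?thesis by blast
  next
    case False
    then obtain A i j where A: "A \<in> F" "i < j" "shift i j A \<notin> F"
      unfolding shifted_def by blast
    let ?F = "shift_family i j F"
    have fin: "\<forall>B\<in>F. finite B" using less.prems(3,4) card_ge_0_finite by metis
    have "card (shadow ?F) \<le> card (shift_family i j (shadow F))"
      using shadow_shift_family_subset[OF A(2)] finite_shift_family[OF finite_shadow[OF less.prems(2) fin]]
      by (rule card_mono[rotated])
    also have "\<dots> = card (shadow F)" using card_shift_family A(2) by simp
    finally have shadow_le: "card (shadow ?F) \<le> card (shadow F)" .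
    show ?thesis
    proof (rule less.hyps[of ?F])
      show "weight ?F < weight F" using weight_shift_family_less[OF less.prems(2) fin A(2,1,3)] .
    next
      fix G assume "shifted G" "finite G" "card G = card ?F" "card (shadow G) \<le> card (shadow ?F)"
        "\<forall>A\<in>G. card A = k"
      then show thesis
        using less.prems(1) shadow_le card_shift_family[of i j F] A(2) by simp
    next
      show "\<forall>B\<in>?F. card B = k"
        using less.prems(3) by (auto simp: shift_family_def shift_within_def card_shift)
    qed (use less.prems(2,4) finite_shift_family in auto)
  qed
qed

definition link0 :: "nat set set \<Rightarrow> nat set set" where
  "link0 F = (\<lambda>A. A - {0}) ` {A\<in>F. 0 \<in> A}"

definition avoid0 :: "nat set set \<Rightarrow> nat set set" where
  "avoid0 F = {A\<in>F. 0 \<notin> A}"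

lemma finite_link0: "finite F \<Longrightarrow> finite (link0 F)"
  unfolding link0_def by simp

lemma finite_avoid0: "finite F \<Longrightarrow> finite (avoid0 F)"
  unfolding avoid0_def by simp

lemma card_link0_add_card_avoid0:
  assumes "finite F"
  shows "card F = card (link0 F) + card (avoid0 F)"
proof -
  have "inj_on (\<lambda>A. A - {0}) {A\<in>F. 0 \<in> A}"
    by (rule inj_onI) (metis insert_Diff mem_Collect_eq)
  then have "card (link0 F) = card {A\<in>F. 0 \<in> A}"
    unfolding link0_def by (rule card_image)
  moreover have "F = {A\<in>F. 0 \<in> A} \<union> avoid0 F" "{A\<in>F. 0 \<in> A} \<inter> avoid0 F = {}"
    unfolding avoid0_def by auto
  ultimately show ?thesis using assms by (metis card_Un_disjoint finite_Un)
qed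

lemma card_mem_link0: "\<forall>A\<in>F. card A = k \<Longrightarrow> \<forall>B\<in>link0 F. card B = k - 1"
  unfolding link0_def by auto

lemma shadow_avoid0_subset_link0:
  assumes "shifted F"
  shows "shadow (avoid0 F) \<subseteq> link0 F"
proof
  fix B assume "B \<in> shadow (avoid0 F)"
  then obtain A x where A: "A \<in> F" "0 \<notin> A" "x \<in> A" "B = A - {x}"
    unfolding shadow_def avoid0_def by auto
  then have "0 < x" by (cases x) auto
  then have "shift 0 x A \<in> F" using assms A unfolding shifted_def by blast
  moreover have "shift 0 x A = insert 0 B" using A by (auto simp: shift_moves)
  ultimately show "B \<in> link0 F"
    using A unfolding link0_def by (auto intro!: image_eqI[where x = "insert 0 B"])
qed

lemma link0_nonempty:
  assumes "shifted F" "A \<in> F" "A \<noteq> {}"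
  shows "link0 F \<noteq> {}"
proof -
  obtain j where j: "j \<in> A" using assms by auto
  have "0 \<in> shift 0 j A"
    using j by (cases "0 \<in> A") (auto simp: shift_def)
  moreover have "shift 0 j A \<in> F"
    using assms(1,2) j unfolding shifted_def
    by (cases j) (auto simp: shift_eq_self)
  ultimately show ?thesis unfolding link0_def by auto
qed

text \<open>The sets of \<open>link0 F\<close>, and the sets \<open>insert 0 B\<close> for \<open>B\<close> in its shadow, are disjoint
  parts of the shadow of \<open>F\<close>.\<close>
lemma card_link0_add_card_shadow_link0:
  assumes "finite F" "\<forall>A\<in>F. finite A"
  shows "card (link0 F) + card (shadow (link0 F)) \<le> card (shadow F)"
proof -
  have fin: "finite (shadow F)" using finite_shadow[OF assms] .
  have sub1: "link0 F \<subseteq> shadow F"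
    unfolding link0_def shadow_def by auto
  have sub2: "insert 0 ` shadow (link0 F) \<subseteq> shadow F"
  proof
    fix X assume "X \<in> insert 0 ` shadow (link0 F)"
    then obtain A x where "A \<in> F" "0 \<in> A" "x \<in> A" "x \<noteq> 0" "X = insert 0 (A - {0} - {x})"
      unfolding shadow_def link0_def by blast
    then have "X = A - {x}" "x \<in> A" by auto
    with \<open>A \<in> F\<close> show "X \<in> shadow F" unfolding shadow_def by blast
  qed
  have disj: "link0 F \<inter> insert 0 ` shadow (link0 F) = {}"
    unfolding link0_def by auto
  have "inj_on (insert 0) (shadow (link0 F))"
  proof (rule inj_onI)
    fix X Y assume "X \<in> shadow (link0 F)" "Y \<in> shadow (link0 F)" "insert 0 X = insert 0 Y"
    moreover have "\<forall>Z\<in>shadow (link0 F). 0 \<notin> Z"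
      unfolding shadow_def link0_def by auto
    ultimately show "X = Y" by (metis Diff_insert_absorb)
  qed
  then have "card (link0 F) + card (shadow (link0 F)) = card (link0 F) + card (insert 0 ` shadow (link0 F))"
    by (simp add: card_image)
  also have "\<dots> = card (link0 F \<union> insert 0 ` shadow (link0 F))"
    using disj fin sub1 sub2 by (metis card_Un_disjoint finite_subset)
  also have "\<dots> \<le> card (shadow F)"
    using sub1 sub2 fin by (intro card_mono) auto
  finally show ?thesis .
qed

lemma card_le_card_shadow:
  assumes "A \<in> G" "card A = k" "finite G" "\<forall>B\<in>G. finite B"
  shows "k \<le> card (shadow G)"
proof -
  have "inj_on (\<lambda>x. A - {x}) A" by (rule inj_onI) auto
  then have "card ((\<lambda>x. A - {x}) ` A) = k" using assms(2) by (simp add: card_image)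
  moreover have "(\<lambda>x. A - {x}) ` A \<subseteq> shadow G"
    using assms(1) unfolding shadow_def by auto
  ultimately show ?thesis using finite_shadow[OF assms(3,4)] by (metis card_mono)
qed

text \<open>\<open>cascade a t k\<close>: the numbers \<open>a t < \<dots> < a k\<close> of a sum \<open>\<Sum>i=t..k. a i choose i\<close> with
  \<open>a i \<ge> i\<close>: the shape of an \<open>r\<close>-canonical representation, indexed from the bottom up.\<close>
definition cascade :: "(nat \<Rightarrow> nat) \<Rightarrow> nat \<Rightarrow> nat \<Rightarrow> bool" where
  "cascade a t k \<longleftrightarrow> 1 \<le> t \<and> (\<forall>i. t \<le> i \<and> i \<le> k \<longrightarrow> i \<le> a i)
     \<and> (\<forall>i. t \<le> i \<and> i < k \<longrightarrow> a i < a (Suc i))"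

definition kruskal_katona_bound :: "nat \<Rightarrow> nat set set \<Rightarrow> bool" where
  "kruskal_katona_bound k G \<longleftrightarrow> (\<forall>a t. cascade a t k \<longrightarrow> (\<Sum>i=t..k. a i choose i) \<le> card G
      \<longrightarrow> (\<Sum>i=t..k. a i choose (i - 1)) \<le> card (shadow G))"

lemma cascade_gt:
  assumes "cascade a t k" "t < a t" "t \<le> i" "i \<le> k"
  shows "i < a i"
  using assms(3,4)
proof (induction i rule: dec_induct)
  case (step i)
  then have "i < a i" "a i < a (Suc i)" using assms(1) unfolding cascade_def by auto
  then show ?case by simp
qed (use assms(2) in simp)

lemma cascade_pred:
  assumes "cascade a t k" "t < a t"
  shows "cascade (\<lambda>i. a i - 1) t k"
  unfolding cascade_def
proof (intro conjI allI impI)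
  show "1 \<le> t" using assms(1) unfolding cascade_def by simp
next
  fix i assume "t \<le> i \<and> i \<le> k"
  then have "i < a i" using cascade_gt[OF assms] by blast
  then show "i \<le> a i - 1" by simp
next
  fix i assume "t \<le> i \<and> i < k"
  then have "a i < a (Suc i)" "i < a i" using assms cascade_gt[OF assms] unfolding cascade_def by auto
  then show "a i - 1 < a (Suc i) - 1" by linarith
qed

lemma cascade_prepend:
  assumes "cascade b t k" "2 \<le> t" "t \<le> k"
  shows "cascade (b(t - 1 := t - 1)) (t - 1) k"
  unfolding cascade_def
proof (intro conjI allI impI)
  fix i assume "t - 1 \<le> i \<and> i < k"
  then consider "i = t - 1" | "t \<le> i" "i < k" by linarith
  then show "(b(t - 1 := t - 1)) i < (b(t - 1 := t - 1)) (Suc i)"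
  proof cases
    case 1
    then show ?thesis using assms unfolding cascade_def by (auto simp: Suc_le_eq)
  qed (use assms in \<open>auto simp: cascade_def\<close>)
qed (use assms in \<open>auto simp: cascade_def\<close>)

lemma cascade_link:
  assumes "cascade a t k" "2 \<le> k"
  shows "cascade (\<lambda>i. a (Suc i) - 1) (max (t - 1) 1) (k - 1)"
  unfolding cascade_def
proof (intro conjI allI impI)
  fix i assume "max (t - 1) 1 \<le> i \<and> i \<le> k - 1"
  then have "t \<le> Suc i" "Suc i \<le> k" by auto
  then have "Suc i \<le> a (Suc i)" using assms unfolding cascade_def by blast
  then show "i \<le> a (Suc i) - 1" by linarith
next
  fix i assume "max (t - 1) 1 \<le> i \<and> i < k - 1"
  then have "t \<le> Suc i" "Suc i < k" by auto
  then have "a (Suc i) < a (Suc (Suc i))" "Suc i \<le> a (Suc i)"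
    using assms unfolding cascade_def by auto
  then show "a (Suc i) - 1 < a (Suc (Suc i)) - 1" by linarith
qed simp

lemma cascade_sum_pascal:
  assumes "cascade a t k"
  shows "(\<Sum>i=t..k. a i choose i)
    = (\<Sum>i=t..k. (a i - 1) choose i) + (\<Sum>i=t..k. (a i - 1) choose (i - 1))"
proof -
  have "a i choose i = ((a i - 1) choose i) + ((a i - 1) choose (i - 1))" if "i \<in> {t..k}" for i
  proof -
    from that assms have "0 < i" "0 < a i" unfolding cascade_def by auto
    then show ?thesis using choose_reduce_nat[of "a i" i] by simp
  qed
  then show ?thesis by (simp add: sum.distrib)
qed

lemma cascade_shadow_sum_pascal:
  assumes "cascade a t k"
  shows "(\<Sum>i=t..k. a i choose (i - 1))
    = (\<Sum>i=t..k. (a i - 1) choose (i - 1)) + (\<Sum>i=max t 2..k. (a i - 1) choose (i - 2))"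
proof -
  have pointwise: "a i choose (i - 1) = ((a i - 1) choose (i - 1)) + (if 2 \<le> i then (a i - 1) choose (i - 2) else 0)"
    if "i \<in> {t..k}" for i
  proof -
    from that assms have "0 < i" "0 < a i" unfolding cascade_def by auto
    then show ?thesis
      using choose_reduce_nat[of "a i" "i - 1"] by (cases "i = 1") (auto simp: numeral_2_eq_2)
  qed
  have "(\<Sum>i=t..k. a i choose (i - 1)) = (\<Sum>i=t..k. (a i - 1) choose (i - 1))
      + (\<Sum>i=t..k. if 2 \<le> i then (a i - 1) choose (i - 2) else 0)"
    unfolding sum.distrib[symmetric] using pointwise by (intro sum.cong) auto
  also have "(\<Sum>i=t..k. if 2 \<le> i then (a i - 1) choose (i - 2) else 0)
      = (\<Sum>i\<in>{i\<in>{t..k}. 2 \<le> i}. (a i - 1) choose (i - 2))"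
    by (rule sum.inter_filter[symmetric]) simp
  also have "{i\<in>{t..k}. 2 \<le> i} = {max t 2..k}" by auto
  finally show ?thesis .
qed

lemma kruskal_katona_bound_pred:
  assumes KK: "kruskal_katona_bound k G" and a: "cascade a t k" "t < a t" "t \<le> k"
    and G: "(\<Sum>i=t..k. (a i - 1) choose i) < card G"
  shows "(\<Sum>i=t..k. (a i - 1) choose (i - 1)) + (t - 1) \<le> card (shadow G)"
proof -
  define b where "b i = a i - 1" for i
  have b: "cascade b t k" using cascade_pred[OF a(1,2)] unfolding b_def .
  show ?thesis
  proof (cases "t = 1")
    case True
    then show ?thesis using KK b G unfolding kruskal_katona_bound_def b_def by simp
  next
    case False
    then have t2: "2 \<le> t" using a(1) by (auto simp: cascade_def)
    define c where "c = b(t - 1 := t - 1)"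
    have c: "cascade c (t - 1) k" using cascade_prepend[OF b t2 a(3)] unfolding c_def .
    have split: "(\<Sum>i=t-1..k. g (c i) i) = g (t - 1) (t - 1) + (\<Sum>i=t..k. g (b i) i)"
      for g :: "nat \<Rightarrow> nat \<Rightarrow> nat"
    proof -
      have "(\<Sum>i=t-1..k. g (c i) i) = g (c (t - 1)) (t - 1) + (\<Sum>i=Suc (t - 1)..k. g (c i) i)"
        using a(3) by (intro sum.atLeast_Suc_atMost) simp
      also have "(\<Sum>i=Suc (t - 1)..k. g (c i) i) = (\<Sum>i=t..k. g (b i) i)"
        using t2 by (intro sum.cong) (auto simp: c_def)
      finally show ?thesis by (simp add: c_def)
    qed
    have "(\<Sum>i=t-1..k. c i choose i) \<le> card G"
      using split[of "\<lambda>x i. x choose i"] G by (simp add: b_def)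
    then have "(\<Sum>i=t-1..k. c i choose (i - 1)) \<le> card (shadow G)"
      using KK c unfolding kruskal_katona_bound_def by blast
    moreover have "(t - 1) choose (t - 1 - 1) = t - 1"
      using t2 binomial_Suc_n[of "t - 2"] by (simp add: numeral_2_eq_2 Suc_diff_Suc)
    ultimately show ?thesis using split[of "\<lambda>x i. x choose (i - 1)"] by (simp add: b_def)
  qed
qed

lemma kruskal_katona_bound_strict:
  assumes KK: "kruskal_katona_bound k G" and G: "finite G" "\<forall>A\<in>G. card A = k"
  shows "cascade a t k \<Longrightarrow> t \<le> k \<Longrightarrow> (\<Sum>i=t..k. (a i - 1) choose i) < card G
    \<Longrightarrow> (\<Sum>i=t..k. (a i - 1) choose (i - 1)) + (t - 1) \<le> card (shadow G)"
proof (induction "k - t" arbitrary: t rule: less_induct)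
  case less
  show ?case
  proof (cases "t < a t")
    case True
    show ?thesis using kruskal_katona_bound_pred[OF KK less.prems(1) True less.prems(2,3)] .
  next
    case False
    then have at: "a t = t" and t1: "1 \<le> t"
      using less.prems(1,2) unfolding cascade_def by (auto simp: le_antisym)
    show ?thesis
    proof (cases "t = k")
      case True
      from less.prems(3) obtain A where "A \<in> G" by fastforce
      moreover have "\<forall>B\<in>G. finite B" using G(2) t1 True by (metis card.infinite not_one_le_zero)
      ultimately have "k \<le> card (shadow G)" using card_le_card_shadow G by blast
      then show ?thesis using True at t1 by simp
    next
      case False
      then have tk: "t < k" using less.prems(2) by simp
      have "cascade a (Suc t) k" using less.prems(1) unfolding cascade_def by auto
      moreover have "(\<Sum>i=t..k. f i) = f t + (\<Sum>i=Suc t..k. f i)" for f :: "nat \<Rightarrow> nat"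
        using tk by (intro sum.atLeast_Suc_atMost) simp
      ultimately show ?thesis
        using less.hyps[of "Suc t"] tk less.prems(3) at t1 by simp
    qed
  qed
qed

lemma kruskal_katona_bound_link:
  assumes KK: "kruskal_katona_bound (k - 1) P" and a: "cascade a t k" "2 \<le> k"
    and P: "(\<Sum>i=max t 2..k. (a i - 1) choose (i - 1)) \<le> card P"
  shows "(\<Sum>i=max t 2..k. (a i - 1) choose (i - 2)) \<le> card (shadow P)"
proof -
  define t' where "t' = max (t - 1) 1"
  have t': "Suc t' = max t 2" "Suc (k - 1) = k" using a unfolding cascade_def t'_def by auto
  have reindex: "(\<Sum>i=t'..k-1. f (Suc i)) = (\<Sum>i=max t 2..k. f i)" for f :: "nat \<Rightarrow> nat"
    using sum.shift_bounds_cl_Suc_ivl[of f t' "k - 1"] t' by simp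
  have "(\<Sum>i=t'..k-1. (a (Suc i) - 1) choose (i - 1)) \<le> card (shadow P)"
    using KK cascade_link[OF a] P reindex[of "\<lambda>i. (a i - 1) choose (i - 1)"]
    unfolding kruskal_katona_bound_def t'_def by simp
  then show ?thesis using reindex[of "\<lambda>i. (a i - 1) choose (i - 2)"] by simp
qed

lemma kruskal_katona_bound_empty: "kruskal_katona_bound k {}"
  unfolding kruskal_katona_bound_def
proof (intro allI impI)
  fix a t assume a: "cascade a t k" and "(\<Sum>i=t..k. a i choose i) \<le> card {}"
  then have sum0: "(\<Sum>i=t..k. a i choose i) = 0" by (simp only: card.empty le_zero_eq)
  have "\<not> t \<le> k"
  proof
    assume "t \<le> k"
    then have "0 < a k choose k" using a unfolding cascade_def by simp
    also have "\<dots> \<le> (\<Sum>i=t..k. a i choose i)" using \<open>t \<le> k\<close> by (intro member_le_sum) auto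
    finally show False using sum0 by linarith
  qed
  then show "(\<Sum>i=t..k. a i choose (i - 1)) \<le> card (shadow {})" by simp
qed

lemma kruskal_katona_bound_one:
  assumes "finite F" "\<forall>A\<in>F. card A = 1" "F \<noteq> {}"
  shows "kruskal_katona_bound 1 F"
  unfolding kruskal_katona_bound_def
proof (intro allI impI)
  fix a t assume "cascade a t 1"
  then have "t = 1 \<or> t > 1" unfolding cascade_def by auto
  moreover have "1 \<le> card (shadow F)"
    using assms card_le_card_shadow[of _ F 1] by (metis card.infinite ex_in_conv zero_neq_one)
  ultimately show "(\<Sum>i=t..1. a i choose (i - 1)) \<le> card (shadow F)" by auto
qed

lemma kruskal_katona_bound_mono:
  assumes "kruskal_katona_bound k F'" "card F' = card F" "card (shadow F') \<le> card (shadow F)"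
  shows "kruskal_katona_bound k F"
  using assms unfolding kruskal_katona_bound_def by (metis le_trans)

text \<open>The link of \<open>0\<close> absorbs the shadow of the sets avoiding \<open>0\<close>, so it is at least as large
  as the upper half of the Pascal split of the cascade; the bound for the link in dimension
  \<open>k - 1\<close> then covers the lower half.\<close>
lemma kruskal_katona_bound_shifted:
  assumes F: "shifted F" "finite F" "\<forall>A\<in>F. card A = k" "2 \<le> k"
    and KK_link: "kruskal_katona_bound (k - 1) (link0 F)"
    and KK_avoid: "kruskal_katona_bound k (avoid0 F)"
  shows "kruskal_katona_bound k F"
  unfolding kruskal_katona_bound_def
proof (intro allI impI)
  fix a t assume a: "cascade a t k" and le: "(\<Sum>i=t..k. a i choose i) \<le> card F"
  show "(\<Sum>i=t..k. a i choose (i - 1)) \<le> card (shadow F)"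
  proof (cases "t \<le> k")
    case False then show ?thesis by simp
  next
    case True
    let ?upper = "\<Sum>i=t..k. (a i - 1) choose (i - 1)"
    have link_large: "?upper \<le> card (link0 F)"
    proof (rule ccontr)
      assume "\<not> ?upper \<le> card (link0 F)"
      then have "(\<Sum>i=t..k. (a i - 1) choose i) < card (avoid0 F)"
        using cascade_sum_pascal[OF a] le card_link0_add_card_avoid0[OF F(2)] by linarith
      then have "?upper + (t - 1) \<le> card (shadow (avoid0 F))"
        using kruskal_katona_bound_strict[OF KK_avoid finite_avoid0[OF F(2)] _ a True] F(3)
        by (simp add: avoid0_def)
      also have "\<dots> \<le> card (link0 F)"
        using shadow_avoid0_subset_link0[OF F(1)] finite_link0[OF F(2)] by (rule card_mono[rotated])
      finally show False using \<open>\<not> ?upper \<le> card (link0 F)\<close> by simp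
    qed
    have "(\<Sum>i=max t 2..k. (a i - 1) choose (i - 1)) \<le> ?upper"
      by (rule sum_mono2) auto
    then have "(\<Sum>i=max t 2..k. (a i - 1) choose (i - 2)) \<le> card (shadow (link0 F))"
      using kruskal_katona_bound_link[OF KK_link a F(4)] link_large by linarith
    moreover have "\<forall>A\<in>F. finite A" using F(3,4) card.infinite by force
    ultimately show ?thesis
      using cascade_shadow_sum_pascal[OF a] link_large card_link0_add_card_shadow_link0[OF F(2)]
      by linarith
  qed
qed

theorem kruskal_katona:
  assumes "finite F" "\<forall>A\<in>F. card A = k" "1 \<le> k"
  shows "kruskal_katona_bound k F"
  using assms
proof (induction k arbitrary: F rule: less_induct)
  case (less k)
  show ?case using less.prems
  proof (induction "card F" arbitrary: F rule: less_induct)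
    case inner: less
    consider "F = {}" | "k = 1" "F \<noteq> {}" | "2 \<le> k" "F \<noteq> {}" using inner.prems(3) by linarith
    then show ?case
    proof cases
      case 1 then show ?thesis using kruskal_katona_bound_empty by simp
    next
      case 2 then show ?thesis using kruskal_katona_bound_one inner.prems by simp
    next
      case 3
      obtain G where G: "shifted G" "finite G" "card G = card F"
        "card (shadow G) \<le> card (shadow F)" "\<forall>A\<in>G. card A = k"
        using exists_shifted_family[OF inner.prems(1,2)] inner.prems(3) by auto
      have "G \<noteq> {}" using G(2,3) 3(2) inner.prems(1) by auto
      then obtain A where "A \<in> G" by blast
      moreover have "A \<noteq> {}" using G(5) \<open>A \<in> G\<close> 3(1) by auto
      ultimately have "0 < card (link0 G)"
        using link0_nonempty[OF G(1)] finite_link0[OF G(2)] by (simp add: card_gt_0_iff)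
      then have "card (avoid0 G) < card F"
        using card_link0_add_card_avoid0[OF G(2)] G(3) by linarith
      then have "kruskal_katona_bound k (avoid0 G)"
        using inner.hyps finite_avoid0[OF G(2)] G(5) inner.prems(3) by (simp add: avoid0_def)
      moreover have "kruskal_katona_bound (k - 1) (link0 G)"
        using less.IH[of "k - 1"] 3 finite_link0[OF G(2)] card_mem_link0[OF G(5)] by simp
      ultimately show ?thesis
        using kruskal_katona_bound_shifted[OF G(1,2,5) 3(1)] kruskal_katona_bound_mono G(3,4) by blast
    qed
  qed
qed

definition cliques :: "nat \<Rightarrow> graph \<Rightarrow> nat set set" where
  "cliques j G = {S. S \<subseteq> fst G \<and> card S = j \<and> (\<forall>u\<in>S. \<forall>v\<in>S. u \<noteq> v \<longrightarrow> {u, v} \<in> snd G)}"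

lemma kcount_eq_card_cliques: "kcount j G = card (cliques j G)"
  unfolding kcount_def cliques_def by simp

lemma finite_cliques: "is_graph G \<Longrightarrow> finite (cliques j G)"
  unfolding is_graph_def cliques_def by (rule finite_subset[of _ "Pow (fst G)"]) auto

lemma card_mem_cliques: "\<forall>A\<in>cliques j G. card A = j"
  unfolding cliques_def by auto

lemma shadow_cliques_subset: "shadow (cliques (Suc j) G) \<subseteq> cliques j G"
proof
  fix B assume "B \<in> shadow (cliques (Suc j) G)"
  then obtain A x where A: "A \<in> cliques (Suc j) G" "x \<in> A" "B = A - {x}"
    unfolding shadow_def by auto
  then have "finite A" unfolding cliques_def by (auto intro: card_ge_0_finite)
  then show "B \<in> cliques j G" using A unfolding cliques_def by auto
qed

lemma cascade_drop:
  assumes "cascade a t k" "e < t"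
  shows "cascade (\<lambda>i. a (i + e)) (t - e) (k - e)"
  unfolding cascade_def
proof (intro conjI allI impI)
  fix i assume "t - e \<le> i \<and> i \<le> k - e"
  then have "t \<le> i + e" "i + e \<le> k" using assms(2) by auto
  then show "i \<le> a (i + e)" using assms(1) unfolding cascade_def by fastforce
next
  fix i assume "t - e \<le> i \<and> i < k - e"
  then have "t \<le> i + e" "i + e < k" using assms(2) by auto
  then show "a (i + e) < a (Suc i + e)" using assms(1) unfolding cascade_def by auto
qed (use assms(2) in simp)

lemma kcount_cascade_lower:
  assumes G: "is_graph G" and a: "cascade a t k" "t \<le> k"
    and le: "(\<Sum>i=t..k. a i choose i) \<le> kcount k G"
  shows "e \<le> t \<Longrightarrow> (\<Sum>i=t..k. a i choose (i - e)) \<le> kcount (k - e) G"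
proof (induction e)
  case 0 then show ?case using le by simp
next
  case (Suc e)
  have reindex: "(\<Sum>i=t-e..k-e. f (i + e)) = (\<Sum>i=t..k. f i)" for f :: "nat \<Rightarrow> nat"
    using sum.shift_bounds_cl_nat_ivl[of f "t - e" e "k - e"] Suc.prems a(2) by simp
  have "(\<Sum>i=t-e..k-e. a (i + e) choose (i - 1)) \<le> card (shadow (cliques (k - e) G))"
    using kruskal_katona[OF finite_cliques[OF G] card_mem_cliques] cascade_drop[OF a(1)]
      Suc reindex[of "\<lambda>i. a i choose (i - e)"] a(2)
    unfolding kruskal_katona_bound_def kcount_eq_card_cliques by simp
  also have "\<dots> \<le> kcount (k - Suc e) G"
    using shadow_cliques_subset[of "k - Suc e" G] finite_cliques[OF G] Suc.prems a(2)
    unfolding kcount_eq_card_cliques by (metis Suc_diff_Suc Suc_le_lessD card_mono le_trans)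
  finally show ?case using reindex[of "\<lambda>i. a i choose (i - Suc e)"] by simp
qed

lemma sum_atLeastAtMost_top3:
  "2 \<le> (k::nat) \<Longrightarrow> (\<Sum>i=k-2..k. f i) = f (k - 2) + f (k - 1) + (f k :: 'a::comm_monoid_add)"
proof -
  assume "2 \<le> k"
  then have "{k-2..k} = insert (k - 2) (insert (k - 1) {k})" "k - 2 \<notin> insert (k - 1) {k}" "k - 1 \<noteq> k"
    by auto
  then show ?thesis by (simp add: add.assoc)
qed

lemma sum_atLeastAtMost_top2:
  "1 \<le> (k::nat) \<Longrightarrow> (\<Sum>i=k-1..k. f i) = f (k - 1) + (f k :: 'a::comm_monoid_add)"
proof -
  assume "1 \<le> k"
  then have "{k-1..k} = insert (k - 1) {k}" "k - 1 \<noteq> k" by auto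
  then show ?thesis by simp
qed

lemma kcount_lower_three:
  assumes G: "is_graph G" and rs: "2 \<le> r" "r < s" and nm: "m < n" "s - 1 \<le> m"
    and lt: "(n choose s) + (m choose (s - 1)) < kcount s G"
  shows "(n choose r) + (m choose (r - 1)) + (s - 2 choose (r - 2)) \<le> kcount r G"
proof -
  define a where "a i = (if i = s then n else if i = s - 1 then m else s - 2)" for i
  have a_at: "a s = n" "a (s - 1) = m" "a (s - 2) = s - 2" using rs unfolding a_def by auto
  have "cascade a (s - 2) s" using rs nm unfolding cascade_def a_def by auto
  moreover have "(\<Sum>i=s-2..s. a i choose i) \<le> kcount s G"
    using lt rs a_at by (simp add: sum_atLeastAtMost_top3)
  ultimately have "(\<Sum>i=s-2..s. a i choose (i - (s - r))) \<le> kcount (s - (s - r)) G"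
    using rs by (intro kcount_cascade_lower[OF G]) auto
  moreover have "s - 2 - (s - r) = r - 2" "s - 1 - (s - r) = r - 1" "s - (s - r) = r"
    using rs by auto
  ultimately show ?thesis using rs a_at by (simp add: sum_atLeastAtMost_top3)
qed

lemma kcount_lower_two:
  assumes G: "is_graph G" and rs: "2 \<le> r" "r < s" and "s \<le> n"
    and lt: "n choose s < kcount s G"
  shows "(n choose r) + (s - 1 choose (r - 1)) \<le> kcount r G"
proof -
  define a where "a i = (if i = s then n else s - 1)" for i
  have a_at: "a s = n" "a (s - 1) = s - 1" using rs unfolding a_def by auto
  have "cascade a (s - 1) s" using rs \<open>s \<le> n\<close> unfolding cascade_def a_def by auto
  moreover have "(\<Sum>i=s-1..s. a i choose i) \<le> kcount s G"
    using sum_atLeastAtMost_top2[of s "\<lambda>i. a i choose i"] lt rs a_at by simp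
  ultimately have "(\<Sum>i=s-1..s. a i choose (i - (s - r))) \<le> kcount (s - (s - r)) G"
    using rs by (intro kcount_cascade_lower[OF G]) auto
  moreover have "s - 1 - (s - r) = r - 1" "s - (s - r) = r" using rs by auto
  ultimately show ?thesis
    using sum_atLeastAtMost_top2[of s "\<lambda>i. a i choose (i - (s - r))"] rs a_at by simp
qed

lemma kcount_lower_one:
  assumes G: "is_graph G" and "r < s" and "0 < kcount s G"
  shows "s choose r \<le> kcount r G"
proof -
  have "cascade (\<lambda>_. s) s s" using \<open>r < s\<close> unfolding cascade_def by auto
  moreover have "(\<Sum>i=s..s. s choose i) \<le> kcount s G" using \<open>0 < kcount s G\<close> by simp
  ultimately have "(\<Sum>i=s..s. s choose (i - (s - r))) \<le> kcount (s - (s - r)) G"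
    by (intro kcount_cascade_lower[OF G]) auto
  then show ?thesis using \<open>r < s\<close> by simp
qed

text \<open>Here \<open>x\<close> lies below the next candidate values \<open>Suc n choose r\<close> and
  \<open>(n choose r) + (m choose (r - 1)) + (Suc t choose (r - 2))\<close> of its canonical representation.\<close>
lemma kcount_upper_bound:
  assumes G: "is_graph G" and rs: "2 \<le> r" "r < s" and "m < n" "Suc t \<le> s - 2"
    and x: "x < Suc n choose r" "x < (n choose r) + (m choose (r - 1)) + (Suc t choose (r - 2))"
    and "kcount r G \<le> x"
  shows "kcount s G \<le> (n choose s) + (m choose (s - 1))"
proof (rule ccontr)
  assume "\<not> ?thesis"
  then have lt: "(n choose s) + (m choose (s - 1)) < kcount s G" by simp
  have t: "Suc t choose (r - 2) \<le> s - 2 choose (r - 2)"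
    using \<open>Suc t \<le> s - 2\<close> by (rule binomial_right_mono)
  consider "s - 1 \<le> m" | "m < s - 1" "s \<le> n" | "n < s" by linarith
  then show False
  proof cases
    case 1
    then show False
      using kcount_lower_three[OF G rs \<open>m < n\<close> 1 lt] t x(2) \<open>kcount r G \<le> x\<close> by linarith
  next
    case 2
    have "s - 1 choose (r - 1) = (s - 2 choose (r - 2)) + (s - 2 choose (r - 1))"
      using rs choose_reduce_nat[of "s - 1" "r - 1"] by (simp add: numeral_2_eq_2 diff_diff_add)
    moreover have "m choose (r - 1) \<le> s - 2 choose (r - 1)"
      using 2 by (intro binomial_right_mono) linarith
    ultimately show False
      using kcount_lower_two[OF G rs 2(2)] lt 2(1) t x(2) \<open>kcount r G \<le> x\<close> by simp
  next
    case 3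
    then have "Suc n choose r \<le> s choose r" by (intro binomial_right_mono) simp
    then show False using kcount_lower_one[OF G rs(2)] lt x(1) \<open>kcount r G \<le> x\<close> by simp
  qed
qed

definition clique_plus_vertex :: "nat \<Rightarrow> nat \<Rightarrow> graph" where
  "clique_plus_vertex n m =
    ({0..n}, {{u, v} | u v. u \<noteq> v \<and> u < n \<and> v < n} \<union> {{u, n} | u. u < m})"

lemma is_graph_clique_plus_vertex: "m < n \<Longrightarrow> is_graph (clique_plus_vertex n m)"
  unfolding is_graph_def clique_plus_vertex_def by auto

lemma clique_plus_vertex_adjacent:
  assumes "m < n" "u \<noteq> v"
  shows "{u, v} \<in> snd (clique_plus_vertex n m)
    \<longleftrightarrow> (u < n \<and> v < n) \<or> (u = n \<and> v < m) \<or> (v = n \<and> u < m)"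
  using assms unfolding clique_plus_vertex_def by (auto simp: doubleton_eq_iff)

lemma mem_cliques_clique_plus_vertex:
  assumes "m < n"
  shows "S \<in> cliques j (clique_plus_vertex n m)
    \<longleftrightarrow> card S = j \<and> (S \<subseteq> {0..<n} \<or> n \<in> S \<and> S - {n} \<subseteq> {0..<m})"
proof
  assume "S \<in> cliques j (clique_plus_vertex n m)"
  then have S: "S \<subseteq> {0..n}" "card S = j"
    and adj: "\<And>u v. u \<in> S \<Longrightarrow> v \<in> S \<Longrightarrow> u \<noteq> v \<Longrightarrow> {u, v} \<in> snd (clique_plus_vertex n m)"
    unfolding cliques_def by (auto simp: clique_plus_vertex_def)
  have "S - {n} \<subseteq> {0..<m}" if "n \<in> S"
    using adj[OF _ that] clique_plus_vertex_adjacent[OF assms] by fastforce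
  then show "card S = j \<and> (S \<subseteq> {0..<n} \<or> n \<in> S \<and> S - {n} \<subseteq> {0..<m})"
    using S by fastforce
next
  assume S: "card S = j \<and> (S \<subseteq> {0..<n} \<or> n \<in> S \<and> S - {n} \<subseteq> {0..<m})"
  then have sub: "S \<subseteq> {0..n}" and low: "\<And>u. u \<in> S \<Longrightarrow> u \<noteq> n \<Longrightarrow> n \<in> S \<Longrightarrow> u < m"
    using assms by auto
  have "{u, v} \<in> snd (clique_plus_vertex n m)" if "u \<in> S" "v \<in> S" "u \<noteq> v" for u v
    using that sub low[of u] low[of v] clique_plus_vertex_adjacent[OF assms that(3)] by fastforce
  then show "S \<in> cliques j (clique_plus_vertex n m)"
    using S sub unfolding cliques_def by (simp add: clique_plus_vertex_def)
qed

lemma kcount_clique_plus_vertex: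
  assumes "m < n" "1 \<le> j"
  shows "kcount j (clique_plus_vertex n m) = (n choose j) + (m choose (j - 1))"
proof -
  let ?low = "{S. S \<subseteq> {0..<n} \<and> card S = j}" and ?T = "{T. T \<subseteq> {0..<m} \<and> card T = j - 1}"
  have "cliques j (clique_plus_vertex n m) = ?low \<union> insert n ` ?T"
  proof (intro equalityI subsetI)
    fix S assume "S \<in> cliques j (clique_plus_vertex n m)"
    then have S: "card S = j" "S \<subseteq> {0..<n} \<or> n \<in> S \<and> S - {n} \<subseteq> {0..<m}"
      unfolding mem_cliques_clique_plus_vertex[OF assms(1)] by auto
    show "S \<in> ?low \<union> insert n ` ?T"
    proof (cases "S \<subseteq> {0..<n}")
      case False
      then have "n \<in> S" "S - {n} \<in> ?T"
        using S finite_subset[of "S - {n}" "{0..<m}"] by auto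
      then show ?thesis by (auto intro!: image_eqI[where x = "S - {n}"])
    qed (use S in simp)
  next
    fix S assume "S \<in> ?low \<union> insert n ` ?T"
    moreover have "card (insert n T) = j" if "T \<in> ?T" for T
      using that assms finite_subset[of T "{0..<m}"] by (auto simp: card_insert_if)
    ultimately show "S \<in> cliques j (clique_plus_vertex n m)"
      unfolding mem_cliques_clique_plus_vertex[OF assms(1)] using assms(1) by auto
  qed
  moreover have "inj_on (insert n) ?T"
    using assms(1) by (intro inj_onI) (metis Diff_insert_absorb atLeastLessThan_iff
        mem_Collect_eq not_less_iff_gr_or_eq subsetD)
  moreover have "?low \<inter> insert n ` ?T = {}" by auto
  ultimately show ?thesis
    unfolding kcount_eq_card_cliques
    by (simp add: card_Un_disjoint card_image n_subsets)
qed

lemma le_choose_add: "1 \<le> k \<Longrightarrow> a \<le> (a choose k) + k"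
proof (induction a)
  case (Suc a)
  show ?case
  proof (cases "Suc a \<le> k")
    case False
    then obtain k' where k: "k = Suc k'" "k' \<le> a" using Suc.prems by (cases k) auto
    then have "1 \<le> a choose k'" by (simp add: Suc_le_eq)
    then show ?thesis using Suc k by simp
  qed simp
qed simp

lemma greatest_choose_le:
  assumes "0 < z" "1 \<le> k"
  defines "g \<equiv> GREATEST a. a choose k \<le> z"
  shows "g choose k \<le> z" "z < Suc g choose k" "k \<le> g"
proof -
  let ?P = "\<lambda>a. a choose k \<le> z"
  have bound: "y \<le> z + k" if "?P y" for y using le_choose_add[OF assms(2), of y] that by linarith
  have "?P 0" using assms by (cases k) auto
  then show "g choose k \<le> z" unfolding g_def using bound by (rule GreatestI_nat)
  show "z < Suc g choose k"
    using Greatest_le_nat[of ?P "Suc g" "z + k"] bound unfolding g_def by force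
  have "?P k" using assms by simp
  then show "k \<le> g" unfolding g_def using bound by (rule Greatest_le_nat)
qed

lemma greatest_choose_eq:
  assumes "g choose k \<le> z" "z < Suc g choose k"
  shows "(GREATEST a. a choose k \<le> z) = g"
proof (rule Greatest_equality)
  fix y assume "y choose k \<le> z"
  then show "y \<le> g"
    using assms(2) binomial_right_mono[of "Suc g" y k] by (meson le_trans not_less not_less_eq_eq)
qed (use assms in simp)

lemma canon_Cons:
  assumes "canon k z = a # L"
  shows "1 \<le> k" "0 < z" "a = (GREATEST a. a choose k \<le> z)" "L = canon (k - 1) (z - (a choose k))"
proof -
  obtain k' where k: "k = Suc k'" using assms by (cases k) auto
  with assms have "z \<noteq> 0" by (cases "z = 0") auto
  with assms k show "1 \<le> k" "0 < z" "a = (GREATEST a. a choose k \<le> z)"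
    "L = canon (k - 1) (z - (a choose k))" by (auto simp: Let_def)
qed

text \<open>Entries of a canonical representation are strictly decreasing, so the one at position
  \<open>j\<close> is below \<open>b - j\<close> whenever the represented number is below \<open>b choose k\<close>.\<close>
lemma canon_nth_add_less: "z < b choose k \<Longrightarrow> j < length (canon k z) \<Longrightarrow> canon k z ! j + j < b"
proof (induction k arbitrary: z b j)
  case (Suc k)
  then have "z \<noteq> 0" by (cases "z = 0") auto
  define g where "g = (GREATEST a. a choose Suc k \<le> z)"
  have g: "g choose Suc k \<le> z" "z < Suc g choose Suc k"
    using greatest_choose_le[of z "Suc k"] \<open>z \<noteq> 0\<close> unfolding g_def by auto
  have canon_z: "canon (Suc k) z = g # canon k (z - (g choose Suc k))"
    using \<open>z \<noteq> 0\<close> unfolding g_def by (simp add: Let_def)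
  have "g < b"
    using g(1) Suc.prems(1) binomial_right_mono[of b g "Suc k"] by (meson le_trans not_less)
  moreover have "z - (g choose Suc k) < g choose k" using g by simp
  ultimately show ?case
  proof (cases j)
    case (Suc i)
    then have "canon k (z - (g choose Suc k)) ! i + i < g"
      using Suc.IH[of "z - (g choose Suc k)" g i] Suc.prems(2) canon_z \<open>z - (g choose Suc k) < g choose k\<close> by simp
    then show ?thesis using Suc \<open>g < b\<close> by (simp only: canon_z) simp
  qed (use \<open>g < b\<close> in \<open>simp only: canon_z, simp\<close>)
qed simp

lemma canon_three:
  assumes "2 \<le> r" "canon r x = [n, m, t]"
  shows "m < n" "r - 1 \<le> m" "(n choose r) + (m choose (r - 1)) \<le> x"
    "x < Suc n choose r" "x < (n choose r) + (Suc m choose (r - 1))"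
    "x < (n choose r) + (m choose (r - 1)) + (Suc t choose (r - 2))"
proof -
  define x1 where "x1 = x - (n choose r)"
  define x2 where "x2 = x1 - (m choose (r - 1))"
  have c1: "canon (r - 1) x1 = [m, t]" and n: "n = (GREATEST a. a choose r \<le> x)" "0 < x"
    using canon_Cons[OF assms(2)] unfolding x1_def by auto
  have c2: "canon (r - 2) x2 = [t]" and m: "m = (GREATEST a. a choose (r - 1) \<le> x1)" "0 < x1" "1 \<le> r - 1"
    using canon_Cons[OF c1] unfolding x2_def by (auto simp: diff_diff_add numeral_2_eq_2)
  have t: "t = (GREATEST a. a choose (r - 2) \<le> x2)" "0 < x2" "1 \<le> r - 2"
    using canon_Cons[OF c2] by auto
  note gn = greatest_choose_le[OF n(2) order.trans[OF one_le_numeral assms(1)], folded n(1)]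
  note gm = greatest_choose_le[OF m(2,3), folded m(1)]
  note gt = greatest_choose_le[OF t(2,3), folded t(1)]
  have "x = (n choose r) + x1" "x1 = (m choose (r - 1)) + x2"
    using gn(1) gm(1) unfolding x1_def x2_def by simp_all
  then show "r - 1 \<le> m" "(n choose r) + (m choose (r - 1)) \<le> x" "x < Suc n choose r"
    "x < (n choose r) + (Suc m choose (r - 1))"
    "x < (n choose r) + (m choose (r - 1)) + (Suc t choose (r - 2))"
    using gn(2) gm(2,3) gt(2) by linarith+
  show "m < n"
  proof (rule ccontr)
    assume "\<not> m < n"
    then have "n choose (r - 1) \<le> m choose (r - 1)" by (intro binomial_right_mono) simp
    moreover have "Suc n choose r = (n choose r) + (n choose (r - 1))"
      using assms(1) by (cases r) auto
    ultimately show False using gn(1,2) gm(1) unfolding x1_def by linarith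
  qed
qed

lemma kmax_eq_two_terms:
  assumes rs: "2 \<le> r" "r < s" and "m < n" "Suc t \<le> s - 2"
    and y: "(n choose r) + (m choose (r - 1)) \<le> y" "y < Suc n choose r"
      "y < (n choose r) + (m choose (r - 1)) + (Suc t choose (r - 2))"
  shows "kmax r s y = (n choose s) + (m choose (s - 1))"
proof -
  let ?V = "(n choose s) + (m choose (s - 1))"
  let ?A = "{kcount s G | G. is_graph G \<and> kcount r G \<le> y}"
  have bounded: "v \<le> ?V" if "v \<in> ?A" for v
  proof -
    obtain G where "v = kcount s G" "is_graph G" "kcount r G \<le> y" using \<open>v \<in> ?A\<close> by blast
    then show ?thesis
      using kcount_upper_bound[OF \<open>is_graph G\<close> rs \<open>m < n\<close> \<open>Suc t \<le> s - 2\<close> y(2,3)] by simp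
  qed
  have "?V \<in> ?A"
  proof -
    let ?G = "clique_plus_vertex n m"
    have "kcount r ?G \<le> y" "?V = kcount s ?G"
      using kcount_clique_plus_vertex[OF \<open>m < n\<close>] rs y(1) by simp_all
    then show ?thesis using is_graph_clique_plus_vertex[OF \<open>m < n\<close>] by blast
  qed
  moreover have "finite ?A" using bounded by (intro finite_subset[OF _ finite_atMost]) blast
  ultimately show ?thesis unfolding kmax_def using bounded by (intro Max_eqI) auto
qed

lemma canon_two_leading:
  assumes "2 \<le> r" "r - 1 \<le> m" "(n choose r) + (m choose (r - 1)) \<le> y"
    "y < Suc n choose r" "y < (n choose r) + (Suc m choose (r - 1))"
  shows "canon r y = n # m # canon (r - 2) (y - (n choose r) - (m choose (r - 1)))"
proof -
  obtain k where r: "r = Suc (Suc k)" using assms(1) by (metis add_2_eq_Suc le_Suc_ex)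
  have "0 < m choose (r - 1)" using assms(2) by simp
  then have "y \<noteq> 0" "y - (n choose r) \<noteq> 0" using assms(3) by linarith+
  moreover have "(GREATEST a. a choose r \<le> y) = n"
    using assms(3,4) by (intro greatest_choose_eq) linarith+
  moreover have "(GREATEST a. a choose (r - 1) \<le> y - (n choose r)) = m"
    using assms(3,5) by (intro greatest_choose_eq) linarith+
  ultimately show ?thesis using r by (simp add: Let_def)
qed

lemma canon_shift_two_leading:
  assumes "canon r y = n # m # canon k z" "z < Suc t choose k" "Suc t \<le> s - 2"
  shows "canon_shift r s y = (n choose s) + (m choose (s - 1))"
proof -
  let ?L = "canon k z"
  have "canon_shift r s y = (n choose s) + ((m choose (s - 1)) + (\<Sum>i<length ?L. ?L ! i choose (s - Suc (Suc i))))"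
    unfolding canon_shift_def assms(1)
    by (simp only: Let_def length_Cons sum.lessThan_Suc_shift nth_Cons_0 nth_Cons_Suc diff_zero One_nat_def)
  also have "(\<Sum>i<length ?L. ?L ! i choose (s - Suc (Suc i))) = 0"
  proof (intro sum.neutral ballI)
    fix i assume "i \<in> {..<length ?L}"
    then have "?L ! i + i < Suc t" using canon_nth_add_less[OF assms(2)] by simp
    then show "?L ! i choose (s - Suc (Suc i)) = 0" using assms(3) by simp
  qed
  finally show ?thesis by simp
qed

theorem theorem3:
  fixes r s x n m t w :: nat
  assumes "2 \<le> r" and "r < s"
    and "canon r x = [n, m, t]"
    and "t choose (r - 2) = w choose (r - 1)"
    and "s - 2 > t" and "s - 1 > w"
  shows "kmax r s x = canon_shift r s x
         \<and> canon_shift r s x = (n choose s) + (m choose (s - 1))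
         \<and> (\<forall>y::nat. (n choose r) + (m choose (r - 1)) \<le> y \<and> y \<le> x \<longrightarrow>
              kmax r s y = canon_shift r s y
              \<and> canon_shift r s y = (n choose s) + (m choose (s - 1)))"
proof -
  note x = canon_three[OF assms(1,3)]
  have t: "Suc t \<le> s - 2" using assms(5) by simp
  have interval: "kmax r s y = (n choose s) + (m choose (s - 1))
      \<and> canon_shift r s y = (n choose s) + (m choose (s - 1))"
    if y: "(n choose r) + (m choose (r - 1)) \<le> y" "y \<le> x" for y
  proof
    show "kmax r s y = (n choose s) + (m choose (s - 1))"
      using kmax_eq_two_terms[OF assms(1,2) x(1) t y(1)] x(4,6) y(2) by linarith
    have "y - (n choose r) - (m choose (r - 1)) < Suc t choose (r - 2)"
      using x(6) y by linarith
    then show "canon_shift r s y = (n choose s) + (m choose (s - 1))"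
      using canon_shift_two_leading[OF canon_two_leading[OF assms(1) x(2) y(1)] _ t] x(4,5) y(2)
      by linarith
  qed
  show ?thesis using interval x(3) by simp
qed

end
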